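(* Fix an integer $b\ge2$ and let $X$ be the negative definite plumbed 4-manifold with boundary $I_{30(b-2)+19}=Y(b;(2,1),(3,2),(5,1))$ whose plumbing graph has vertices $v_1,\dots,v_5$: $v_5$ central of weight $-b$; $v_1$ of weight $-2$ adjacent only to $v_5$; $v_3$ of weight $-2$ adjacent to $v_5$ and $v_2$; $v_2$ of weight $-2$ adjacent only to $v_3$; $v_4$ of weight $-5$ adjacent only to $v_5$. Let $Q$ be its intersection form in the basis $v_1,\dots,v_5$, let $Q^n$ be the orthogonal sum of $n$ copies, with basis $v^i_1,\dots,v^i_5$ for the $i$-th copy. If $\rho$ is a lattice embedding of $Q^n$ into the standard negative definite lattice $(\mathbb{Z}^{5n},\langle-1\rangle^{5n})$ with standard basis $e_1,\dots,e_{5n}$, then, up to automorphisms of the standard lattice, for $i=1,\dots,n$: $\rho(v_1^i)=e_{1+5(i-1)}-e_{2+5(i-1)}$, $\rho(v_2^i)=e_{3+5(i-1)}-e_{4+5(i-1)}$, $\rho(v_3^i)=e_{4+5(i-1)}-e_{5+5(i-1)}$, and $\rho(v_4^i)=\pm(e_{1+5(\sigma_1(i)-1)}+e_{2+5(\sigma_1(i)-1)})\pm(e_{3+5(\sigma_2(i)-1)}+e_{4+5(\sigma_2(i)-1)}+e_{5+5(\sigma_2(i)-1)})$, for some permutations $\sigma_1,\sigma_2$ of $\{1,\dots,n\}$.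
   Context: $(\mathbb{Z}^{5n},\langle-1\rangle^{5n})$ denotes $\mathbb{Z}^{5n}$ with $e_i\cdot e_j=-\delta_{ij}$; a lattice embedding is an injective homomorphism preserving the pairing. In the intersection form, $v_j\cdot v_j$ is the weight and $v_j\cdot v_k=1$ if adjacent, $0$ otherwise. *)

theory Defs
  imports Main "HOL-Combinatorics.Permutations" "HOL-Library.Function_Algebras"
begin

text \<open>Vectors of the standard lattice Z^N are functions nat => int supported on {1..N};
  coordinate k is the coefficient of the standard basis vector e_k.\<close>

definition std_vec :: "nat \<Rightarrow> (nat \<Rightarrow> int) \<Rightarrow> bool" where
  "std_vec N x \<longleftrightarrow> (\<forall>k. x k \<noteq> 0 \<longrightarrow> k \<in> {1..N})"

definition std_pair :: "nat \<Rightarrow> (nat \<Rightarrow> int) \<Rightarrow> (nat \<Rightarrow> int) \<Rightarrow> int" where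
  "std_pair N x y = - (\<Sum>k\<in>{1..N}. x k * y k)"

definition e :: "nat \<Rightarrow> nat \<Rightarrow> int" where
  "e k = (\<lambda>m. if m = k then 1 else 0)"

definition std_lattice_aut :: "nat \<Rightarrow> ((nat \<Rightarrow> int) \<Rightarrow> (nat \<Rightarrow> int)) \<Rightarrow> bool" where
  "std_lattice_aut N A \<longleftrightarrow>
     (\<forall>x y. std_vec N x \<longrightarrow> std_vec N y \<longrightarrow> A (x + y) = A x + A y) \<and>
     bij_betw A {x. std_vec N x} {x. std_vec N x} \<and>
     (\<forall>x y. std_vec N x \<longrightarrow> std_vec N y \<longrightarrow> std_pair N (A x) (A y) = std_pair N x y)"

definition Qform :: "int \<Rightarrow> nat \<Rightarrow> nat \<Rightarrow> int" where
  "Qform b j j' =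
     (if j = j' then (if j = 4 then -5 else if j = 5 then -b else -2)
      else if {j, j'} = {1, 5} \<or> {j, j'} = {3, 5} \<or> {j, j'} = {2, 3} \<or> {j, j'} = {4, 5}
      then 1 else 0)"

definition Qn :: "int \<Rightarrow> nat \<Rightarrow> nat \<Rightarrow> nat \<Rightarrow> nat \<Rightarrow> int" where
  "Qn b i j i' j' = (if i = i' then Qform b j j' else 0)"

text \<open>A lattice embedding of Q^n into (Z^{5n}, <-1>^{5n}), given by the images
  rho i j of the basis vectors v^i_j: the images lie in Z^{5n}, the pairing is
  preserved, and the induced homomorphism is injective.\<close>
definition lattice_embedding :: "int \<Rightarrow> nat \<Rightarrow> (nat \<Rightarrow> nat \<Rightarrow> (nat \<Rightarrow> int)) \<Rightarrow> bool" where
  "lattice_embedding b n rho \<longleftrightarrow>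
     (\<forall>i\<in>{1..n}. \<forall>j\<in>{1..5}. std_vec (5*n) (rho i j)) \<and>
     (\<forall>i\<in>{1..n}. \<forall>j\<in>{1..5}. \<forall>i'\<in>{1..n}. \<forall>j'\<in>{1..5}.
        std_pair (5*n) (rho i j) (rho i' j') = Qn b i j i' j') \<and>
     (\<forall>c :: nat \<Rightarrow> nat \<Rightarrow> int.
        (\<forall>k. (\<Sum>i\<in>{1..n}. \<Sum>j\<in>{1..5}. c i j * rho i j k) = 0) \<longrightarrow>
        (\<forall>i\<in>{1..n}. \<forall>j\<in>{1..5}. c i j = 0))"

end

theory Submission
  imports Defs
begin

text \<open>The images of the \<open>-2\<close>-vertices \<open>v\<^sub>1, v\<^sub>2, v\<^sub>3\<close> have square \<open>-2\<close>, so they are of the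
  form \<open>\<plusminus>e\<^sub>a \<plusminus> e\<^sub>b\<close>. Two such orthogonal vectors either have disjoint supports or the same
  support, and in the latter case they pair with every vector with the same parity; pairing
  with a neighbour in the plumbing graph excludes this. Hence the \<open>5n\<close> coordinates split into
  blocks of five, one per copy, carrying \<open>v\<^sub>1\<close> on two coordinates and the chain \<open>v\<^sub>2 - v\<^sub>3\<close> on
  three, and a signed permutation of coordinates puts them into the stated form. The image
  \<open>w\<close> of \<open>v\<^sub>4\<close> is orthogonal to \<open>e\<^sub>1 - e\<^sub>2, e\<^sub>3 - e\<^sub>4, e\<^sub>4 - e\<^sub>5\<close> of every block, so it is
  constant on each pair and each triple; then \<open>5 = 2 a + 3 c\<close> with \<open>a, c\<close> sums of squares
  forces a single \<open>\<plusminus>1\<close> on one pair and one triple, and orthogonality of the images of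
  different copies makes these pairs and triples distinct, which gives the permutations.\<close>

section \<open>Vectors of square two in the standard lattice\<close>

definition std_dot :: "nat \<Rightarrow> (nat \<Rightarrow> int) \<Rightarrow> (nat \<Rightarrow> int) \<Rightarrow> int" where
  "std_dot N x y = (\<Sum>k\<in>{1..N}. x k * y k)"

lemma std_pair_eq_minus_std_dot: "std_pair N x y = - std_dot N x y"
  by (simp add: std_pair_def std_dot_def)

lemma std_dot_e:
  assumes "s \<in> {1..N}"
  shows "std_dot N x (e s) = x s"
proof -
  have "std_dot N x (e s) = (\<Sum>k\<in>{1..N}. if k = s then x k else 0)"
    unfolding std_dot_def by (rule sum.cong) (auto simp: e_def)
  also have "\<dots> = x s" using assms by simp
  finally show ?thesis .
qed

lemma std_dot_diff_right: "std_dot N x (y - z) = std_dot N x y - std_dot N x z"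
  by (simp add: std_dot_def right_diff_distrib sum_subtractf)

lemma sum_squares_less_four:
  fixes f :: "'a \<Rightarrow> int"
  assumes "finite S" and sum: "(\<Sum>k\<in>S. (f k)\<^sup>2) = m" and "m < 4"
  shows "\<forall>k\<in>S. f k \<in> {-1, 0, 1}" and "int (card {k\<in>S. f k \<noteq> 0}) = m"
proof -
  have "(f k)\<^sup>2 < 2\<^sup>2" if "k \<in> S" for k
    using member_le_sum[of k S "\<lambda>k. (f k)\<^sup>2"] assms that by auto
  then have "\<bar>f k\<bar> < 2" if "k \<in> S" for k
    using that power2_less_imp_less[of "\<bar>f k\<bar>" 2] by simp
  then show unit: "\<forall>k\<in>S. f k \<in> {-1, 0, 1}" by fastforce
  have "m = (\<Sum>k\<in>S. if f k \<noteq> 0 then 1 else 0)"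
    unfolding sum[symmetric] by (rule sum.cong) (use unit in auto)
  also have "\<dots> = int (card {k\<in>S. f k \<noteq> 0})"
    using \<open>finite S\<close> by (simp add: sum.If_cases Int_def)
  finally show "int (card {k\<in>S. f k \<noteq> 0}) = m" ..
qed

lemma sum_squares_eq_one:
  fixes f :: "'a \<Rightarrow> int"
  assumes "finite S" and "(\<Sum>k\<in>S. (f k)\<^sup>2) = 1"
  obtains j where "j \<in> S" "f j \<in> {1, -1}" "\<forall>k\<in>S. k \<noteq> j \<longrightarrow> f k = 0"
proof -
  from sum_squares_less_four[OF assms] obtain j where j: "{k\<in>S. f k \<noteq> 0} = {j}"
    by (auto simp: card_1_singleton_iff)
  moreover have "f j \<in> {-1, 0, 1}" using sum_squares_less_four(1)[OF assms] j by auto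
  ultimately show thesis by (intro that) auto
qed

lemma norm2_vectorE:
  assumes "std_vec N u" and "std_dot N u u = 2"
  obtains a c where "a \<noteq> c" "a \<in> {1..N}" "c \<in> {1..N}"
    "\<forall>k. u k \<noteq> 0 \<longleftrightarrow> k = a \<or> k = c" "\<forall>k. u k \<in> {-1, 0, 1}"
proof -
  have sq: "(\<Sum>k\<in>{1..N}. (u k)\<^sup>2) = 2"
    using assms(2) by (simp add: std_dot_def power2_eq_square)
  obtain a c where ac: "{k\<in>{1..N}. u k \<noteq> 0} = {a, c}" "a \<noteq> c"
    using sum_squares_less_four(2)[OF _ sq] by (auto simp: card_2_iff)
  have outside: "u k = 0" if "k \<notin> {1..N}" for k
    using assms(1) that by (auto simp: std_vec_def)
  show thesis
  proof (rule that)
    show "\<forall>k. u k \<noteq> 0 \<longleftrightarrow> k = a \<or> k = c"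
      using ac(1) outside by blast
    show "\<forall>k. u k \<in> {-1, 0, 1}"
    proof
      fix k
      show "u k \<in> {-1, 0, 1}"
        using sum_squares_less_four(1)[OF _ sq] outside[of k] by (cases "k \<in> {1..N}") auto
    qed
  qed (use ac in auto)
qed

lemma std_dot_two_support:
  assumes "a \<noteq> c" "a \<in> {1..N}" "c \<in> {1..N}" "\<forall>k. u k \<noteq> 0 \<longleftrightarrow> k = a \<or> k = c"
  shows "std_dot N u v = u a * v a + u c * v c"
proof -
  have "std_dot N u v = (\<Sum>k\<in>{a, c}. u k * v k)"
    unfolding std_dot_def by (rule sum.mono_neutral_right) (use assms in auto)
  with \<open>a \<noteq> c\<close> show ?thesis by simp
qed

lemma same_support_std_dot_parity:
  assumes "\<forall>k. u k \<in> {-1, 0, 1}" "\<forall>k. w k \<in> {-1, 0, 1}" "\<forall>k. u k \<noteq> 0 \<longleftrightarrow> w k \<noteq> 0"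
  shows "even (std_dot N u z - std_dot N w z)"
proof -
  have "even (u k - w k)" for k
    using assms(1-3)[rule_format, of k] by auto
  then have "even (\<Sum>k\<in>{1..N}. (u k - w k) * z k)"
    by (intro dvd_sum) simp
  then show ?thesis
    by (simp add: std_dot_def sum_subtractf left_diff_distrib)
qed

text \<open>Orthogonal roots sharing a coordinate have the same support, hence pair with any
  vector to the same value mod 2.\<close>
lemma norm2_orthogonal_disjoint:
  assumes u: "std_vec N u" "std_dot N u u = 2" and w: "std_vec N w" "std_dot N w w = 2"
    and orth: "std_dot N u w = 0" and odd: "odd (std_dot N u z - std_dot N w z)"
  shows "u k = 0 \<or> w k = 0"
proof (rule ccontr)
  assume "\<not> (u k = 0 \<or> w k = 0)"
  then have k: "u k \<noteq> 0" "w k \<noteq> 0" by auto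
  obtain a c where ac: "a \<noteq> c" "a \<in> {1..N}" "c \<in> {1..N}"
      "\<forall>k. u k \<noteq> 0 \<longleftrightarrow> k = a \<or> k = c" "\<forall>k. u k \<in> {-1, 0, 1}"
    using u by (rule norm2_vectorE)
  obtain a' c' where ac': "a' \<noteq> c'" "a' \<in> {1..N}" "c' \<in> {1..N}"
      "\<forall>k. w k \<noteq> 0 \<longleftrightarrow> k = a' \<or> k = c'" "\<forall>k. w k \<in> {-1, 0, 1}"
    using w by (rule norm2_vectorE)
  have "u a * w a + u c * w c = 0"
    using orth std_dot_two_support[OF ac(1-4)] by simp
  moreover have "u a \<noteq> 0" "u c \<noteq> 0" "w a \<noteq> 0 \<or> w c \<noteq> 0"
    using ac(4) k by auto
  ultimately have "w a \<noteq> 0" "w c \<noteq> 0" by auto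
  then have "a \<in> {a', c'}" "c \<in> {a', c'}" using ac'(4) by auto
  with ac(1) ac'(1) have "{a', c'} = {a, c}" by auto
  with ac(4) ac'(4) have "\<forall>k. u k \<noteq> 0 \<longleftrightarrow> w k \<noteq> 0" by blast
  with ac(5) ac'(5) have "even (std_dot N u z - std_dot N w z)"
    by (rule same_support_std_dot_parity)
  with odd show False ..
qed

lemma norm2_std_dot_minus_one:
  assumes u: "std_vec N u" "std_dot N u u = 2" and w: "std_vec N w" "std_dot N w w = 2"
    and "std_dot N u w = -1"
  obtains a c d where "distinct [a, c, d]" "a \<in> {1..N}" "c \<in> {1..N}" "d \<in> {1..N}"
    "\<forall>k. u k \<noteq> 0 \<longleftrightarrow> k = a \<or> k = c" "\<forall>k. w k \<noteq> 0 \<longleftrightarrow> k = c \<or> k = d" "u c * w c = -1"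
proof -
  obtain x y where xy: "x \<noteq> y" "x \<in> {1..N}" "y \<in> {1..N}"
      "\<forall>k. u k \<noteq> 0 \<longleftrightarrow> k = x \<or> k = y" "\<forall>k. u k \<in> {-1, 0, 1}"
    using u by (rule norm2_vectorE)
  obtain x' y' where xy': "x' \<noteq> y'" "x' \<in> {1..N}" "y' \<in> {1..N}"
      "\<forall>k. w k \<noteq> 0 \<longleftrightarrow> k = x' \<or> k = y'" "\<forall>k. w k \<in> {-1, 0, 1}"
    using w by (rule norm2_vectorE)
  have sum: "u x * w x + u y * w y = -1"
    using assms(5) std_dot_two_support[OF xy(1-4)] by simp
  have "u x \<in> {-1, 1}" "u y \<in> {-1, 1}" "w x \<in> {-1, 0, 1}" "w y \<in> {-1, 0, 1}"
    using xy(4,5) xy'(5) by auto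
  with sum have "w x = 0 \<and> u y * w y = -1 \<or> w y = 0 \<and> u x * w x = -1"
    by auto
  then obtain a c where ac: "{a, c} = {x, y}" "a \<noteq> c" "w a = 0" "u c * w c = -1"
    using xy(1) by (metis insert_commute)
  then have "c = x' \<or> c = y'" using xy'(4) by fastforce
  then obtain d where d: "{c, d} = {x', y'}" "c \<noteq> d"
    using xy'(1) by (metis insert_commute)
  show thesis
  proof (rule that)
    show "distinct [a, c, d]" using ac d xy'(4) by auto
    show "\<forall>k. u k \<noteq> 0 \<longleftrightarrow> k = a \<or> k = c" using ac(1) xy(4) by auto
    show "\<forall>k. w k \<noteq> 0 \<longleftrightarrow> k = c \<or> k = d" using d(1) xy'(4) by auto
  qed (use ac d xy xy' in auto)
qed

section \<open>Signed permutations of coordinates and blocks of coordinates\<close>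

definition signed_perm :: "nat \<Rightarrow> (nat \<Rightarrow> int) \<Rightarrow> (nat \<Rightarrow> nat) \<Rightarrow> (nat \<Rightarrow> int) \<Rightarrow> nat \<Rightarrow> int" where
  "signed_perm N s q x = (\<lambda>t. if t \<in> {1..N} then s t * x (q t) else 0)"

lemma std_vec_signed_perm: "std_vec N (signed_perm N s q x)"
  by (simp add: signed_perm_def std_vec_def)

lemma signed_perm_add: "signed_perm N s q (x + y) = signed_perm N s q x + signed_perm N s q y"
  by (simp add: signed_perm_def fun_eq_iff distrib_left)

lemma signed_perm_signed_perm:
  assumes "\<forall>t\<in>{1..N}. q t \<in> {1..N} \<and> q' (q t) = t \<and> s t * s' (q t) = 1" and "std_vec N x"
  shows "signed_perm N s q (signed_perm N s' q' x) = x"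
proof
  fix t
  show "signed_perm N s q (signed_perm N s' q' x) t = x t"
  proof (cases "t \<in> {1..N}")
    case True
    with assms(1) show ?thesis by (auto simp: signed_perm_def mult.assoc[symmetric])
  qed (use assms(2) in \<open>auto simp: signed_perm_def std_vec_def\<close>)
qed

lemma std_pair_signed_perm:
  assumes q: "bij_betw q {1..N} {1..N}" and s: "\<forall>t\<in>{1..N}. s t \<in> {1, -1}"
  shows "std_pair N (signed_perm N s q x) (signed_perm N s q y) = std_pair N x y"
proof -
  have "(\<Sum>t\<in>{1..N}. signed_perm N s q x t * signed_perm N s q y t) = (\<Sum>t\<in>{1..N}. x (q t) * y (q t))"
  proof (rule sum.cong)
    fix t assume "t \<in> {1..N}"
    with s have "s t \<in> {1, -1}" ..
    then show "signed_perm N s q x t * signed_perm N s q y t = x (q t) * y (q t)"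
      using \<open>t \<in> {1..N}\<close> by (auto simp: signed_perm_def)
  qed simp
  also have "\<dots> = (\<Sum>k\<in>{1..N}. x k * y k)"
    using sum.reindex_bij_betw[OF q, of "\<lambda>k. x k * y k"] by simp
  finally show ?thesis by (simp add: std_pair_def)
qed

lemma signed_perm_std_lattice_aut:
  assumes q: "bij_betw q {1..N} {1..N}" and s: "\<forall>t\<in>{1..N}. s t \<in> {1, -1}"
  shows "std_lattice_aut N (signed_perm N s q)"
proof -
  define q' where "q' = the_inv_into {1..N} q"
  have q': "bij_betw q' {1..N} {1..N}"
    unfolding q'_def by (rule bij_betw_the_inv_into[OF q])
  have ss: "s t * s t = 1" if "t \<in> {1..N}" for t
  proof -
    from s that have "s t \<in> {1, -1}" ..
    then show ?thesis by auto
  qed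
  have "\<forall>t\<in>{1..N}. q t \<in> {1..N} \<and> q' (q t) = t \<and> s t * (s \<circ> q') (q t) = 1"
    using q ss by (auto simp: q'_def bij_betw_def the_inv_into_f_f)
  then have right: "signed_perm N s q (signed_perm N (s \<circ> q') q' y) = y" if "std_vec N y" for y
    using that by (rule signed_perm_signed_perm)
  have "\<forall>k\<in>{1..N}. q' k \<in> {1..N} \<and> q (q' k) = k \<and> (s \<circ> q') k * s (q' k) = 1"
    using q q' ss[OF bspec[OF bij_betwE[OF q']]] by (auto simp: q'_def bij_betw_def f_the_inv_into_f)
  then have left: "signed_perm N (s \<circ> q') q' (signed_perm N s q x) = x" if "std_vec N x" for x
    using that by (rule signed_perm_signed_perm)
  have "bij_betw (signed_perm N s q) {x. std_vec N x} {x. std_vec N x}"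
    by (rule bij_betw_byWitness[where f' = "signed_perm N (s \<circ> q') q'"])
      (auto simp: std_vec_signed_perm left right)
  then show ?thesis
    unfolding std_lattice_aut_def using signed_perm_add std_pair_signed_perm[OF q s] by blast
qed

lemma signed_perm_two_support:
  assumes q: "bij_betw q {1..N} {1..N}" and t: "t1 \<in> {1..N}" "t2 \<in> {1..N}" "t1 \<noteq> t2"
    and u: "\<forall>k. u k \<noteq> 0 \<longrightarrow> k = q t1 \<or> k = q t2"
  shows "signed_perm N s q u = (\<lambda>t. s t1 * u (q t1) * e t1 t + s t2 * u (q t2) * e t2 t)"
proof
  fix t
  have "u (q t) = 0" if "t \<in> {1..N}" "t \<noteq> t1" "t \<noteq> t2"
    using u that t inj_onD[OF bij_betw_imp_inj_on[OF q]] by metis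
  then show "signed_perm N s q u t = s t1 * u (q t1) * e t1 t + s t2 * u (q t2) * e t2 t"
    using t by (auto simp: signed_perm_def e_def)
qed

definition block_pos :: "nat \<Rightarrow> nat \<Rightarrow> nat \<Rightarrow> nat" where
  "block_pos m i r = r + m * (i - 1)"

lemma block_pos_bij:
  assumes "0 < m"
  shows "bij_betw (\<lambda>(i, r). block_pos m i r) ({1..n} \<times> {1..m}) {1..m * n}"
proof (rule bij_betwI[where g = "\<lambda>t. ((t - 1) div m + 1, (t - 1) mod m + 1)"])
  have "r + m * (i - 1) \<le> m * n" if "r \<le> m" "1 \<le> i" "i \<le> n" for i r
  proof -
    have "r + m * (i - 1) \<le> m + m * (i - 1)" using that by simp
    also have "\<dots> = m * i" using that by (cases i) auto
    finally show ?thesis using that by (meson mult_le_mono2 order.trans)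
  qed
  then show "(\<lambda>(i, r). block_pos m i r) \<in> {1..n} \<times> {1..m} \<rightarrow> {1..m * n}"
    by (auto simp: block_pos_def)
  have "(t - 1) div m < n" if "t \<in> {1..m * n}" for t
    using that assms by (auto simp: div_less_iff_less_mult mult.commute)
  then show "(\<lambda>t. ((t - 1) div m + 1, (t - 1) mod m + 1)) \<in> {1..m * n} \<rightarrow> {1..n} \<times> {1..m}"
    using assms by (auto simp: Suc_le_eq)
  show "(\<lambda>t. ((t - 1) div m + 1, (t - 1) mod m + 1)) ((\<lambda>(i, r). block_pos m i r) p) = p"
    if mem: "p \<in> {1..n} \<times> {1..m}" for p
  proof -
    obtain i r where p: "p = (i, r)" "i \<in> {1..n}" "r \<in> {1..m}" using mem by blast
    then have eq: "block_pos m i r - 1 = (r - 1) + m * (i - 1)"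
      by (simp add: block_pos_def)
    have "r - 1 < m" using p by auto
    then have "(block_pos m i r - 1) div m = i - 1" "(block_pos m i r - 1) mod m = r - 1"
      unfolding eq by simp_all
    then show ?thesis using p by auto
  qed
  show "(case ((t - 1) div m + 1, (t - 1) mod m + 1) of (i, r) \<Rightarrow> block_pos m i r) = t"
    if "t \<in> {1..m * n}" for t
    using that by (simp add: block_pos_def add.commute)
qed

lemma sum_blocks:
  assumes "0 < m"
  shows "(\<Sum>k\<in>{1..m * n}. F k) = (\<Sum>i\<in>{1..n}. \<Sum>r\<in>{1..m}. F (block_pos m i r))"
  using sum.reindex_bij_betw[OF block_pos_bij[OF assms], of F]
  by (simp add: sum.cartesian_product split_def)

lemma block_pos_mem: "i \<in> {1..n} \<Longrightarrow> r \<in> {1..m} \<Longrightarrow> block_pos m i r \<in> {1..m * n}"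
  using bij_betwE[OF block_pos_bij[of m n]] by fastforce

lemma block_pos_eq_iff:
  assumes "i \<in> {1..n}" "i' \<in> {1..n}" "r \<in> {1..m}" "r' \<in> {1..m}"
  shows "block_pos m i r = block_pos m i' r' \<longleftrightarrow> i = i' \<and> r = r'"
  using inj_onD[OF bij_betw_imp_inj_on[OF block_pos_bij[of m n]], of "(i, r)" "(i', r')"] assms
  by auto

lemma block_pos_cases:
  assumes "t \<in> {1..m * n}"
  obtains i r where "i \<in> {1..n}" "r \<in> {1..m}" "t = block_pos m i r"
proof -
  have "0 < m" using assms by (cases m) auto
  with assms obtain p where "p \<in> {1..n} \<times> {1..m}" "t = (\<lambda>(i, r). block_pos m i r) p"
    using bij_betw_imp_surj_on[OF block_pos_bij] by blast
  then show thesis using that by auto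
qed

lemma inj_on_restrict_id_permutes:
  "finite A \<Longrightarrow> inj_on f A \<Longrightarrow> f ` A \<subseteq> A \<Longrightarrow> restrict_id f A permutes A"
  by (simp add: permutes_restrict_id bij_betw_def endo_inj_surj)

section \<open>Vectors constant on the pairs and triples of the blocks\<close>

definition pair_triple_constant :: "nat \<Rightarrow> (nat \<Rightarrow> int) \<Rightarrow> bool" where
  "pair_triple_constant n w \<longleftrightarrow> (\<forall>i\<in>{1..n}.
     w (block_pos 5 i 2) = w (block_pos 5 i 1) \<and>
     w (block_pos 5 i 4) = w (block_pos 5 i 3) \<and> w (block_pos 5 i 5) = w (block_pos 5 i 3))"

lemma std_dot_pair_triple_constant:
  assumes "pair_triple_constant n w" "pair_triple_constant n w'"
  shows "std_dot (5 * n) w w' = (\<Sum>i\<in>{1..n}.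
    2 * (w (block_pos 5 i 1) * w' (block_pos 5 i 1)) + 3 * (w (block_pos 5 i 3) * w' (block_pos 5 i 3)))"
proof -
  have five: "{1..5::nat} = {1, 2, 3, 4, 5}" by auto
  have "std_dot (5 * n) w w' = (\<Sum>i\<in>{1..n}. \<Sum>r\<in>{1..5}. w (block_pos 5 i r) * w' (block_pos 5 i r))"
    unfolding std_dot_def by (rule sum_blocks) simp
  also have "\<dots> = (\<Sum>i\<in>{1..n}.
    2 * (w (block_pos 5 i 1) * w' (block_pos 5 i 1)) + 3 * (w (block_pos 5 i 3) * w' (block_pos 5 i 3)))"
  proof (rule sum.cong)
    fix i assume "i \<in> {1..n}"
    with assms show "(\<Sum>r\<in>{1..5}. w (block_pos 5 i r) * w' (block_pos 5 i r)) =
      2 * (w (block_pos 5 i 1) * w' (block_pos 5 i 1)) + 3 * (w (block_pos 5 i 3) * w' (block_pos 5 i 3))"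
      unfolding five by (simp add: pair_triple_constant_def)
  qed simp
  finally show ?thesis .
qed

lemma sum_one_hot_products:
  fixes s s' :: int
  assumes "finite S" "j \<in> S"
  shows "(\<Sum>i\<in>S. (if i = j then s else 0) * (if i = j' then s' else 0)) = (if j = j' then s * s' else 0)"
proof -
  have "(if i = j then s else 0) * (if i = j' then s' else 0) = (if i = j then (if j = j' then s * s' else 0) else 0)"
    for i by auto
  with assms show ?thesis by simp
qed

lemma pair_triple_constant_norm_5:
  assumes w: "pair_triple_constant n w" and norm: "std_dot (5 * n) w w = 5"
  obtains j1 j2 s1 s2 where "j1 \<in> {1..n}" "j2 \<in> {1..n}" "s1 \<in> {1, -1}" "s2 \<in> {1, -1}"
    "\<forall>i\<in>{1..n}. w (block_pos 5 i 1) = (if i = j1 then s1 else 0)"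
    "\<forall>i\<in>{1..n}. w (block_pos 5 i 3) = (if i = j2 then s2 else 0)"
proof -
  let ?X = "\<Sum>i\<in>{1..n}. (w (block_pos 5 i 1))\<^sup>2" and ?Y = "\<Sum>i\<in>{1..n}. (w (block_pos 5 i 3))\<^sup>2"
  have "5 = 2 * ?X + 3 * ?Y"
    using norm std_dot_pair_triple_constant[OF w w]
    by (simp add: sum.distrib sum_distrib_left power2_eq_square)
  moreover have "?X \<ge> 0" "?Y \<ge> 0" by (simp_all add: sum_nonneg)
  moreover have "X = 1 \<and> Y = 1" if "5 = 2 * X + 3 * Y" "X \<ge> 0" "Y \<ge> 0" for X Y :: int
    using that by presburger
  ultimately have "?X = 1" "?Y = 1" by blast+
  obtain j1 where j1: "j1 \<in> {1..n}" "w (block_pos 5 j1 1) \<in> {1, -1}"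
      "\<forall>i\<in>{1..n}. i \<noteq> j1 \<longrightarrow> w (block_pos 5 i 1) = 0"
    using finite_atLeastAtMost \<open>?X = 1\<close> by (rule sum_squares_eq_one)
  obtain j2 where j2: "j2 \<in> {1..n}" "w (block_pos 5 j2 3) \<in> {1, -1}"
      "\<forall>i\<in>{1..n}. i \<noteq> j2 \<longrightarrow> w (block_pos 5 i 3) = 0"
    using finite_atLeastAtMost \<open>?Y = 1\<close> by (rule sum_squares_eq_one)
  show thesis
    by (rule that[OF j1(1) j2(1) j1(2) j2(2)]) (use j1(3) j2(3) in auto)
qed

lemma pair_triple_constant_eq:
  assumes w: "std_vec (5 * n) w" "pair_triple_constant n w" and j: "j1 \<in> {1..n}" "j2 \<in> {1..n}"
    and w1: "\<forall>i\<in>{1..n}. w (block_pos 5 i 1) = (if i = j1 then s1 else 0)"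
    and w3: "\<forall>i\<in>{1..n}. w (block_pos 5 i 3) = (if i = j2 then s2 else 0)"
  shows "w = (\<lambda>k. s1 * (e (block_pos 5 j1 1) k + e (block_pos 5 j1 2) k)
     + s2 * (e (block_pos 5 j2 3) k + e (block_pos 5 j2 4) k + e (block_pos 5 j2 5) k))"
proof
  fix k
  show "w k = s1 * (e (block_pos 5 j1 1) k + e (block_pos 5 j1 2) k)
     + s2 * (e (block_pos 5 j2 3) k + e (block_pos 5 j2 4) k + e (block_pos 5 j2 5) k)"
  proof (cases "k \<in> {1..5 * n}")
    case True
    then obtain i r where ir: "i \<in> {1..n}" "r \<in> {1..5}" "k = block_pos 5 i r"
      by (rule block_pos_cases)
    have e: "e (block_pos 5 j r') (block_pos 5 i r) = (if j = i \<and> r' = r then 1 else 0)"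
      if "j \<in> {1..n}" "r' \<in> {1..5}" for j r'
      using block_pos_eq_iff[OF that(1) ir(1) that(2) ir(2)] by (auto simp: e_def)
    have wi: "w (block_pos 5 i 2) = w (block_pos 5 i 1)" "w (block_pos 5 i 4) = w (block_pos 5 i 3)"
        "w (block_pos 5 i 5) = w (block_pos 5 i 3)"
      using w(2) ir(1) by (auto simp: pair_triple_constant_def)
    from ir(2) consider "r = 1" | "r = 2" | "r = 3" | "r = 4" | "r = 5" by force
    then show ?thesis
      unfolding ir(3) by cases (use e j wi w1 w3 ir(1) in simp_all)
  next
    case False
    then have "e (block_pos 5 j r) k = 0" if "j \<in> {1..n}" "r \<in> {1..5}" for j r
      using block_pos_mem[OF that] by (auto simp: e_def)
    moreover have "w k = 0" using w(1) False by (auto simp: std_vec_def)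
    ultimately show ?thesis using j by simp
  qed
qed

lemma pair_triple_constant_orthogonal:
  assumes w: "pair_triple_constant n w" "j1 \<in> {1..n}" "j2 \<in> {1..n}" "s1 \<in> {1, -1}" "s2 \<in> {1, -1}"
      "\<forall>i\<in>{1..n}. w (block_pos 5 i 1) = (if i = j1 then s1 else 0)"
      "\<forall>i\<in>{1..n}. w (block_pos 5 i 3) = (if i = j2 then s2 else 0)"
    and w': "pair_triple_constant n w'" "s1' \<in> {1, -1}" "s2' \<in> {1, -1}"
      "\<forall>i\<in>{1..n}. w' (block_pos 5 i 1) = (if i = j1' then s1' else 0)"
      "\<forall>i\<in>{1..n}. w' (block_pos 5 i 3) = (if i = j2' then s2' else 0)"
    and orth: "std_dot (5 * n) w w' = 0"
  shows "j1 \<noteq> j1' \<and> j2 \<noteq> j2'"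
proof -
  have "std_dot (5 * n) w w' = (\<Sum>i\<in>{1..n}.
      2 * ((if i = j1 then s1 else 0) * (if i = j1' then s1' else 0))
      + 3 * ((if i = j2 then s2 else 0) * (if i = j2' then s2' else 0)))"
    unfolding std_dot_pair_triple_constant[OF w(1) w'(1)]
    by (rule sum.cong) (use w w' in simp_all)
  also have "\<dots> = 2 * (if j1 = j1' then s1 * s1' else 0) + 3 * (if j2 = j2' then s2 * s2' else 0)"
    unfolding sum.distrib sum_distrib_left[symmetric]
      sum_one_hot_products[OF finite_atLeastAtMost w(2)] sum_one_hot_products[OF finite_atLeastAtMost w(3)] ..
  finally have "2 * (if j1 = j1' then s1 * s1' else 0) + 3 * (if j2 = j2' then s2 * s2' else 0) = 0"
    using orth by simp
  with w(4,5) w'(2,3) show ?thesis by (auto split: if_splits)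
qed

section \<open>Embeddings of \<open>Q\<^sup>n\<close>\<close>

locale plumbing_embedding =
  fixes b :: int and n :: nat and rho :: "nat \<Rightarrow> nat \<Rightarrow> nat \<Rightarrow> int"
  assumes embedding: "lattice_embedding b n rho"
begin

lemma rho_std_vec: "i \<in> {1..n} \<Longrightarrow> j \<in> {1..5} \<Longrightarrow> std_vec (5 * n) (rho i j)"
  using embedding by (auto simp: lattice_embedding_def)

lemma rho_std_dot:
  assumes "i \<in> {1..n}" "j \<in> {1..5}" "i' \<in> {1..n}" "j' \<in> {1..5}"
  shows "std_dot (5 * n) (rho i j) (rho i' j') = - (if i = i' then Qform b j j' else 0)"
proof -
  have "std_pair (5 * n) (rho i j) (rho i' j') = Qn b i j i' j'"
    using embedding assms unfolding lattice_embedding_def by blast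
  then show ?thesis by (simp add: std_pair_eq_minus_std_dot Qn_def)
qed

lemma rho_root_norm: "i \<in> {1..n} \<Longrightarrow> j \<in> {1, 2, 3} \<Longrightarrow> std_dot (5 * n) (rho i j) (rho i j) = 2"
  using rho_std_dot[of i j i j] by (auto simp: Qform_def)

lemma rho_root_sign:
  assumes "i \<in> {1..n}" "j \<in> {1, 2, 3}" "rho i j k \<noteq> 0"
  shows "rho i j k \<in> {1, -1}"
proof -
  have "std_vec (5 * n) (rho i j)" "std_dot (5 * n) (rho i j) (rho i j) = 2"
    using assms rho_std_vec rho_root_norm by auto
  then have "rho i j k \<in> {-1, 0, 1}" by (rule norm2_vectorE) blast
  with assms(3) show ?thesis by auto
qed

text \<open>The witness pairing oddly with exactly one of the two roots is a neighbour of one of them;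
  for \<open>v\<^sub>1\<close> in distinct copies it is the central vertex \<open>v\<^sub>5\<close>.\<close>
lemma rho_roots_disjoint:
  assumes i: "i \<in> {1..n}" "i' \<in> {1..n}" and j: "j \<in> {1, 2, 3}" "j' \<in> {1, 2, 3}"
    and "(i, j) \<noteq> (i', j')" and "\<not> (i = i' \<and> {j, j'} = {2, 3})"
  shows "rho i j k = 0 \<or> rho i' j' k = 0"
proof -
  have orth: "std_dot (5 * n) (rho i j) (rho i' j') = 0"
    using rho_std_dot[of i j i' j'] assms by (auto simp: Qform_def doubleton_eq_iff)
  have "\<exists>z. odd (std_dot (5 * n) (rho i j) z - std_dot (5 * n) (rho i' j') z)"
  proof -
    consider "j = 1" "j' = 1" | "j = 2" | "j = 3" | "j = 1" "j' = 2" | "j = 1" "j' = 3"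
      using j by auto
    then show ?thesis
    proof cases
      case 1
      then show ?thesis using assms
        by (intro exI[of _ "rho i 5"]) (auto simp: rho_std_dot Qform_def doubleton_eq_iff)
    next
      case 2
      then show ?thesis using assms
        by (intro exI[of _ "rho i 3"]) (auto simp: rho_std_dot Qform_def doubleton_eq_iff)
    next
      case 3
      then show ?thesis using assms
        by (intro exI[of _ "rho i 2"]) (auto simp: rho_std_dot Qform_def doubleton_eq_iff)
    next
      case 4
      then show ?thesis using assms
        by (intro exI[of _ "rho i' 3"]) (auto simp: rho_std_dot Qform_def doubleton_eq_iff)
    next
      case 5
      then show ?thesis using assms
        by (intro exI[of _ "rho i' 2"]) (auto simp: rho_std_dot Qform_def doubleton_eq_iff)
    qed
  qed
  then obtain z where "odd (std_dot (5 * n) (rho i j) z - std_dot (5 * n) (rho i' j') z)" ..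
  with orth show ?thesis
    using i j rho_std_vec rho_root_norm by (intro norm2_orthogonal_disjoint) auto
qed

definition frame :: "nat \<Rightarrow> (nat \<Rightarrow> nat) \<Rightarrow> bool" where
  "frame i g \<longleftrightarrow> (\<forall>r\<in>{1..5}. g r \<in> {1..5 * n}) \<and> distinct [g 1, g 2, g 3, g 4, g 5] \<and>
     (\<forall>k. rho i 1 k \<noteq> 0 \<longleftrightarrow> k = g 1 \<or> k = g 2) \<and>
     (\<forall>k. rho i 2 k \<noteq> 0 \<longleftrightarrow> k = g 3 \<or> k = g 4) \<and>
     (\<forall>k. rho i 3 k \<noteq> 0 \<longleftrightarrow> k = g 4 \<or> k = g 5) \<and>
     rho i 2 (g 4) * rho i 3 (g 4) = -1"

lemma frame_exists:
  assumes i: "i \<in> {1..n}"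
  shows "\<exists>g. frame i g"
proof -
  have root: "std_vec (5 * n) (rho i j)" "std_dot (5 * n) (rho i j) (rho i j) = 2" if "j \<in> {1, 2, 3}" for j
    using i that rho_std_vec rho_root_norm by auto
  obtain a a' where a: "a \<noteq> a'" "a \<in> {1..5 * n}" "a' \<in> {1..5 * n}"
      "\<forall>k. rho i 1 k \<noteq> 0 \<longleftrightarrow> k = a \<or> k = a'" "\<forall>k. rho i 1 k \<in> {-1, 0, 1}"
    using root[of 1] by (rule norm2_vectorE) auto
  have "std_dot (5 * n) (rho i 2) (rho i 3) = -1"
    using rho_std_dot[of i 2 i 3] i by (simp add: Qform_def)
  then obtain c s d where c: "distinct [c, s, d]" "c \<in> {1..5 * n}" "s \<in> {1..5 * n}" "d \<in> {1..5 * n}"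
      "\<forall>k. rho i 2 k \<noteq> 0 \<longleftrightarrow> k = c \<or> k = s" "\<forall>k. rho i 3 k \<noteq> 0 \<longleftrightarrow> k = s \<or> k = d"
      "rho i 2 s * rho i 3 s = -1"
    using root[of 2] root[of 3] by (auto elim: norm2_std_dot_minus_one)
  have "rho i 1 k = 0 \<or> rho i j k = 0" if "j \<in> {2, 3}" for j k
    using rho_roots_disjoint[of i i 1 j k] i that by (auto simp: doubleton_eq_iff)
  then have "a \<notin> {c, s, d}" "a' \<notin> {c, s, d}"
    using a(4) c(5,6) by blast+
  define g where "g r = (if r = 1 then a else if r = 2 then a' else if r = 3 then c
    else if r = 4 then s else d)" for r :: nat
  have g: "g 1 = a" "g 2 = a'" "g 3 = c" "g 4 = s" "g 5 = d" by (simp_all add: g_def)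
  have "g r \<in> {1..5 * n}" if "r \<in> {1..5}" for r
    using a(2,3) c(2-4) by (simp add: g_def)
  with a c \<open>a \<notin> {c, s, d}\<close> \<open>a' \<notin> {c, s, d}\<close> have "frame i g"
    unfolding frame_def g by auto
  then show ?thesis by blast
qed

definition frame_of :: "nat \<Rightarrow> nat \<Rightarrow> nat" where
  "frame_of i = (SOME g. frame i g)"

lemma frame_frame_of: "i \<in> {1..n} \<Longrightarrow> frame i (frame_of i)"
  unfolding frame_of_def using frame_exists by (rule someI_ex)

lemma frame_of_nonzero:
  assumes "i \<in> {1..n}"
  shows "rho i 1 (frame_of i 1) \<noteq> 0" "rho i 1 (frame_of i 2) \<noteq> 0" "rho i 2 (frame_of i 3) \<noteq> 0"
    "rho i 2 (frame_of i 4) \<noteq> 0" "rho i 3 (frame_of i 5) \<noteq> 0"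
  using frame_frame_of[OF assms] unfolding frame_def by blast+

lemma frame_of_support:
  assumes i: "i \<in> {1..n}" and "r \<in> {1..5}"
  shows "\<exists>j\<in>{1, 2, 3}. rho i j (frame_of i r) \<noteq> 0"
proof -
  from \<open>r \<in> {1..5}\<close> consider "r = 1" | "r = 2" | "r = 3" | "r = 4" | "r = 5" by force
  then show ?thesis using frame_of_nonzero[OF i] by cases auto
qed

lemma inj_on_frame_of: "i \<in> {1..n} \<Longrightarrow> inj_on (frame_of i) {1..5}"
proof -
  assume "i \<in> {1..n}"
  then have "distinct [frame_of i 1, frame_of i 2, frame_of i 3, frame_of i 4, frame_of i 5]"
    using frame_frame_of unfolding frame_def by blast
  then have "distinct (map (frame_of i) [1, 2, 3, 4, 5])"
    by (simp only: list.map)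
  then have "inj_on (frame_of i) (set [1, 2, 3, 4, 5])"
    by (simp only: distinct_map)
  moreover have "{1..5::nat} = set [1, 2, 3, 4, 5]" by auto
  ultimately show ?thesis by (simp only:)
qed

lemma frame_of_inj:
  assumes i: "i \<in> {1..n}" "i' \<in> {1..n}" and r: "r \<in> {1..5}" "r' \<in> {1..5}"
    and eq: "frame_of i r = frame_of i' r'"
  shows "i = i' \<and> r = r'"
proof (cases "i = i'")
  case True
  with inj_on_frame_of[OF i(1)] r eq show ?thesis by (auto dest: inj_onD)
next
  case False
  obtain j where j: "j \<in> {1, 2, 3}" "rho i j (frame_of i r) \<noteq> 0"
    using frame_of_support[OF i(1) r(1)] ..
  obtain j' where j': "j' \<in> {1, 2, 3}" "rho i' j' (frame_of i' r') \<noteq> 0"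
    using frame_of_support[OF i(2) r(2)] ..
  have "rho i j (frame_of i r) = 0 \<or> rho i' j' (frame_of i r) = 0"
    by (rule rho_roots_disjoint[OF i j(1) j'(1)]) (use False in simp_all)
  with j(2) j'(2) eq show ?thesis by simp
qed

definition block_index :: "nat \<Rightarrow> nat \<times> nat" where
  "block_index = the_inv_into ({1..n} \<times> {1..5}) (\<lambda>(i, r). block_pos 5 i r)"

lemma block_index_block_pos:
  assumes "i \<in> {1..n}" "r \<in> {1..5}"
  shows "block_index (block_pos 5 i r) = (i, r)"
proof -
  have "the_inv_into ({1..n} \<times> {1..5}) (\<lambda>(i, r). block_pos 5 i r)
      ((\<lambda>(i, r). block_pos 5 i r) (i, r)) = (i, r)"
    by (rule the_inv_into_f_f[OF bij_betw_imp_inj_on[OF block_pos_bij]]) (use assms in simp_all)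
  then show ?thesis by (simp add: block_index_def)
qed

definition coord :: "nat \<Rightarrow> nat" where
  "coord t = case_prod frame_of (block_index t)"

lemma coord_block_pos: "i \<in> {1..n} \<Longrightarrow> r \<in> {1..5} \<Longrightarrow> coord (block_pos 5 i r) = frame_of i r"
  by (simp add: coord_def block_index_block_pos)

lemma frame_of_mem: "i \<in> {1..n} \<Longrightarrow> r \<in> {1..5} \<Longrightarrow> frame_of i r \<in> {1..5 * n}"
  using frame_frame_of unfolding frame_def by blast

lemma bij_coord: "bij_betw coord {1..5 * n} {1..5 * n}"
proof -
  have "inj_on coord {1..5 * n}"
  proof (rule inj_onI)
    fix t t' assume "t \<in> {1..5 * n}" "t' \<in> {1..5 * n}" and eq: "coord t = coord t'"
    obtain i r where ir: "i \<in> {1..n}" "r \<in> {1..5}" "t = block_pos 5 i r"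
      using \<open>t \<in> {1..5 * n}\<close> by (rule block_pos_cases)
    obtain i' r' where ir': "i' \<in> {1..n}" "r' \<in> {1..5}" "t' = block_pos 5 i' r'"
      using \<open>t' \<in> {1..5 * n}\<close> by (rule block_pos_cases)
    have "frame_of i r = frame_of i' r'"
      using eq ir ir' by (simp add: coord_block_pos)
    with frame_of_inj[OF ir(1) ir'(1) ir(2) ir'(2)] show "t = t'"
      using ir(3) ir'(3) by simp
  qed
  moreover have "coord ` {1..5 * n} \<subseteq> {1..5 * n}"
  proof
    fix k assume "k \<in> coord ` {1..5 * n}"
    then obtain t where "t \<in> {1..5 * n}" "k = coord t" ..
    then obtain i r where "i \<in> {1..n}" "r \<in> {1..5}" "k = coord (block_pos 5 i r)"
      by (metis block_pos_cases)
    then show "k \<in> {1..5 * n}" using coord_block_pos frame_of_mem by metis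
  qed
  ultimately show ?thesis
    by (simp add: bij_betw_def endo_inj_surj)
qed

text \<open>The signs are chosen so that \<open>frame_aut\<close> sends the images of \<open>v\<^sub>1, v\<^sub>2, v\<^sub>3\<close> to
  \<open>e\<^sub>1 - e\<^sub>2, e\<^sub>3 - e\<^sub>4, e\<^sub>4 - e\<^sub>5\<close> within their block.\<close>
definition frame_sign :: "nat \<Rightarrow> nat \<Rightarrow> int" where
  "frame_sign i r = [rho i 1 (frame_of i 1), - rho i 1 (frame_of i 2),
     rho i 2 (frame_of i 3), - rho i 2 (frame_of i 4), - rho i 3 (frame_of i 5)] ! (r - 1)"

definition frame_aut :: "(nat \<Rightarrow> int) \<Rightarrow> nat \<Rightarrow> int" where
  "frame_aut = signed_perm (5 * n) (\<lambda>t. case_prod frame_sign (block_index t)) coord"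

lemma frame_of_signs:
  assumes i: "i \<in> {1..n}"
  shows "rho i 1 (frame_of i 1) \<in> {1, -1}" "rho i 1 (frame_of i 2) \<in> {1, -1}"
    "rho i 2 (frame_of i 3) \<in> {1, -1}" "rho i 2 (frame_of i 4) \<in> {1, -1}"
    "rho i 3 (frame_of i 5) \<in> {1, -1}"
  using rho_root_sign[OF i] frame_of_nonzero[OF i] by blast+

lemma frame_sign_unit:
  assumes i: "i \<in> {1..n}" and "r \<in> {1..5}"
  shows "frame_sign i r \<in> {1, -1}"
proof -
  note signs = frame_of_signs[OF i]
  from \<open>r \<in> {1..5}\<close> consider "r = 1" | "r = 2" | "r = 3" | "r = 4" | "r = 5" by force
  then show ?thesis using signs by cases (auto simp: frame_sign_def)
qed

lemma std_lattice_aut_frame_aut: "std_lattice_aut (5 * n) frame_aut"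
  unfolding frame_aut_def
proof (rule signed_perm_std_lattice_aut[OF bij_coord], rule ballI)
  fix t assume "t \<in> {1..5 * n}"
  then obtain i r where "i \<in> {1..n}" "r \<in> {1..5}" "t = block_pos 5 i r"
    by (rule block_pos_cases)
  then have "block_index t = (i, r)" by (simp add: block_index_block_pos)
  with frame_sign_unit[OF \<open>i \<in> {1..n}\<close> \<open>r \<in> {1..5}\<close>]
  show "case_prod frame_sign (block_index t) \<in> {1, -1}" by simp
qed

lemma frame_aut_root:
  assumes i: "i \<in> {1..n}" and r: "r1 \<in> {1..5}" "r2 \<in> {1..5}" "r1 \<noteq> r2"
    and supp: "\<forall>k. rho i j k \<noteq> 0 \<longleftrightarrow> k = frame_of i r1 \<or> k = frame_of i r2"
    and signs: "frame_sign i r1 * rho i j (frame_of i r1) = 1" "frame_sign i r2 * rho i j (frame_of i r2) = -1"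
  shows "frame_aut (rho i j) = e (block_pos 5 i r1) - e (block_pos 5 i r2)"
proof -
  have pos: "block_pos 5 i r1 \<in> {1..5 * n}" "block_pos 5 i r2 \<in> {1..5 * n}"
      "block_pos 5 i r1 \<noteq> block_pos 5 i r2"
    using block_pos_mem[OF i] block_pos_eq_iff[OF i i] r by auto
  have "frame_aut (rho i j) = (\<lambda>t. 1 * e (block_pos 5 i r1) t + (-1) * e (block_pos 5 i r2) t)"
    unfolding frame_aut_def
    by (subst signed_perm_two_support[OF bij_coord pos])
      (use supp signs i r in \<open>simp_all add: coord_block_pos block_index_block_pos\<close>)
  then show ?thesis by (simp add: fun_eq_iff)
qed

lemma frame_aut_roots:
  assumes i: "i \<in> {1..n}"
  shows "frame_aut (rho i 1) = e (block_pos 5 i 1) - e (block_pos 5 i 2)"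
    and "frame_aut (rho i 2) = e (block_pos 5 i 3) - e (block_pos 5 i 4)"
    and "frame_aut (rho i 3) = e (block_pos 5 i 4) - e (block_pos 5 i 5)"
proof -
  have supp: "\<forall>k. rho i 1 k \<noteq> 0 \<longleftrightarrow> k = frame_of i 1 \<or> k = frame_of i 2"
      "\<forall>k. rho i 2 k \<noteq> 0 \<longleftrightarrow> k = frame_of i 3 \<or> k = frame_of i 4"
      "\<forall>k. rho i 3 k \<noteq> 0 \<longleftrightarrow> k = frame_of i 4 \<or> k = frame_of i 5"
    and adj: "rho i 2 (frame_of i 4) * rho i 3 (frame_of i 4) = -1"
    using frame_frame_of[OF i] unfolding frame_def by blast+
  note signs = frame_of_signs[OF i]
  show "frame_aut (rho i 1) = e (block_pos 5 i 1) - e (block_pos 5 i 2)"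
    by (rule frame_aut_root[OF i]) (use supp(1) signs(1,2) in \<open>auto simp: frame_sign_def\<close>)
  show "frame_aut (rho i 2) = e (block_pos 5 i 3) - e (block_pos 5 i 4)"
    by (rule frame_aut_root[OF i]) (use supp(2) signs(3,4) in \<open>auto simp: frame_sign_def\<close>)
  show "frame_aut (rho i 3) = e (block_pos 5 i 4) - e (block_pos 5 i 5)"
    by (rule frame_aut_root[OF i]) (use supp(3) adj signs(5) in \<open>auto simp: frame_sign_def\<close>)
qed

lemma std_vec_frame_aut: "std_vec (5 * n) (frame_aut x)"
  by (simp add: frame_aut_def std_vec_signed_perm)

lemma std_dot_frame_aut:
  "std_vec (5 * n) x \<Longrightarrow> std_vec (5 * n) y \<Longrightarrow> std_dot (5 * n) (frame_aut x) (frame_aut y) = std_dot (5 * n) x y"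
  using std_lattice_aut_frame_aut by (simp add: std_lattice_aut_def std_pair_eq_minus_std_dot)

lemma std_dot_frame_aut_rho4:
  assumes "i \<in> {1..n}" "i' \<in> {1..n}"
  shows "std_dot (5 * n) (frame_aut (rho i 4)) (frame_aut (rho i' 4)) = (if i = i' then 5 else 0)"
  using assms by (simp add: std_dot_frame_aut rho_std_vec rho_std_dot Qform_def)

lemma pair_triple_constant_frame_aut_rho4:
  assumes i: "i \<in> {1..n}"
  shows "pair_triple_constant n (frame_aut (rho i 4))"
  unfolding pair_triple_constant_def
proof
  fix i' assume i': "i' \<in> {1..n}"
  let ?w = "frame_aut (rho i 4)"
  have orth: "std_dot (5 * n) ?w (frame_aut (rho i' j)) = 0" if "j \<in> {1, 2, 3}" for j
    using that i i' by (auto simp: std_dot_frame_aut rho_std_vec rho_std_dot Qform_def doubleton_eq_iff)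
  have diff: "std_dot (5 * n) ?w (e (block_pos 5 i' r) - e (block_pos 5 i' r')) =
      ?w (block_pos 5 i' r) - ?w (block_pos 5 i' r')" if "r \<in> {1..5}" "r' \<in> {1..5}" for r r'
    using std_dot_e[OF block_pos_mem[OF i' that(1)]] std_dot_e[OF block_pos_mem[OF i' that(2)]]
    by (simp add: std_dot_diff_right)
  have "?w (block_pos 5 i' 1) - ?w (block_pos 5 i' 2) = 0"
    using orth[of 1] diff[of 1 2] frame_aut_roots(1)[OF i'] by simp
  moreover have "?w (block_pos 5 i' 3) - ?w (block_pos 5 i' 4) = 0"
    using orth[of 2] diff[of 3 4] frame_aut_roots(2)[OF i'] by simp
  moreover have "?w (block_pos 5 i' 4) - ?w (block_pos 5 i' 5) = 0"
    using orth[of 3] diff[of 4 5] frame_aut_roots(3)[OF i'] by simp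
  ultimately show "?w (block_pos 5 i' 2) = ?w (block_pos 5 i' 1) \<and>
      ?w (block_pos 5 i' 4) = ?w (block_pos 5 i' 3) \<and> ?w (block_pos 5 i' 5) = ?w (block_pos 5 i' 3)"
    by simp
qed

lemma frame_aut_rho4_coefficients:
  obtains J1 J2 :: "nat \<Rightarrow> nat" and S1 S2 :: "nat \<Rightarrow> int" where
    "\<forall>i\<in>{1..n}. J1 i \<in> {1..n}" "\<forall>i\<in>{1..n}. J2 i \<in> {1..n}"
    "\<forall>i\<in>{1..n}. S1 i \<in> {1, -1}" "\<forall>i\<in>{1..n}. S2 i \<in> {1, -1}"
    "\<forall>i\<in>{1..n}. \<forall>i'\<in>{1..n}. frame_aut (rho i 4) (block_pos 5 i' 1) = (if i' = J1 i then S1 i else 0)"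
    "\<forall>i\<in>{1..n}. \<forall>i'\<in>{1..n}. frame_aut (rho i 4) (block_pos 5 i' 3) = (if i' = J2 i then S2 i else 0)"
proof -
  have "\<exists>j1 j2 s1 s2. j1 \<in> {1..n} \<and> j2 \<in> {1..n} \<and> s1 \<in> {1, -1} \<and> s2 \<in> {1, -1} \<and>
       (\<forall>i'\<in>{1..n}. frame_aut (rho i 4) (block_pos 5 i' 1) = (if i' = j1 then s1 else 0)) \<and>
       (\<forall>i'\<in>{1..n}. frame_aut (rho i 4) (block_pos 5 i' 3) = (if i' = j2 then s2 else 0))"
    if i: "i \<in> {1..n}" for i
  proof -
    have "std_dot (5 * n) (frame_aut (rho i 4)) (frame_aut (rho i 4)) = 5"
      using std_dot_frame_aut_rho4[OF i i] by simp
    with pair_triple_constant_frame_aut_rho4[OF i] obtain j1 j2 s1 s2 where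
      "j1 \<in> {1..n}" "j2 \<in> {1..n}" "s1 \<in> {1, -1}" "s2 \<in> {1, -1}"
      "\<forall>i'\<in>{1..n}. frame_aut (rho i 4) (block_pos 5 i' 1) = (if i' = j1 then s1 else 0)"
      "\<forall>i'\<in>{1..n}. frame_aut (rho i 4) (block_pos 5 i' 3) = (if i' = j2 then s2 else 0)"
      by (rule pair_triple_constant_norm_5)
    then show ?thesis by blast
  qed
  then obtain J1 J2 S1 S2 where "\<forall>i\<in>{1..n}. J1 i \<in> {1..n} \<and> J2 i \<in> {1..n} \<and>
       S1 i \<in> {1, -1} \<and> S2 i \<in> {1, -1} \<and>
       (\<forall>i'\<in>{1..n}. frame_aut (rho i 4) (block_pos 5 i' 1) = (if i' = J1 i then S1 i else 0)) \<and>
       (\<forall>i'\<in>{1..n}. frame_aut (rho i 4) (block_pos 5 i' 3) = (if i' = J2 i then S2 i else 0))"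
    by metis
  then show thesis by (intro that[of J1 J2 S1 S2]) blast+
qed

lemma frame_aut_rho4:
  obtains \<sigma>1 \<sigma>2 where "\<sigma>1 permutes {1..n}" "\<sigma>2 permutes {1..n}"
    "\<forall>i\<in>{1..n}. \<exists>s1 s2 :: int. s1 \<in> {1, -1} \<and> s2 \<in> {1, -1} \<and>
       frame_aut (rho i 4) = (\<lambda>k. s1 * (e (block_pos 5 (\<sigma>1 i) 1) k + e (block_pos 5 (\<sigma>1 i) 2) k)
         + s2 * (e (block_pos 5 (\<sigma>2 i) 3) k + e (block_pos 5 (\<sigma>2 i) 4) k + e (block_pos 5 (\<sigma>2 i) 5) k))"
proof -
  obtain J1 J2 S1 S2 where coeffs: "\<forall>i\<in>{1..n}. J1 i \<in> {1..n}" "\<forall>i\<in>{1..n}. J2 i \<in> {1..n}"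
      "\<forall>i\<in>{1..n}. S1 i \<in> {1, -1}" "\<forall>i\<in>{1..n}. S2 i \<in> {1, -1}"
      "\<forall>i\<in>{1..n}. \<forall>i'\<in>{1..n}. frame_aut (rho i 4) (block_pos 5 i' 1) = (if i' = J1 i then S1 i else 0)"
      "\<forall>i\<in>{1..n}. \<forall>i'\<in>{1..n}. frame_aut (rho i 4) (block_pos 5 i' 3) = (if i' = J2 i then S2 i else 0)"
    by (rule frame_aut_rho4_coefficients)
  note J = coeffs(1-4)[rule_format] and W = bspec[OF coeffs(5)] bspec[OF coeffs(6)]
  have "J1 i \<noteq> J1 i' \<and> J2 i \<noteq> J2 i'" if i: "i \<in> {1..n}" "i' \<in> {1..n}" "i \<noteq> i'" for i i'
    by (rule pair_triple_constant_orthogonal[OF pair_triple_constant_frame_aut_rho4[OF i(1)]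
        J[OF i(1)] W[OF i(1)] pair_triple_constant_frame_aut_rho4[OF i(2)] J(3,4)[OF i(2)] W[OF i(2)]])
      (use std_dot_frame_aut_rho4[OF i(1,2)] i(3) in simp)
  then have "inj_on J1 {1..n}" "inj_on J2 {1..n}"
    unfolding inj_on_def by blast+
  then have "restrict_id J1 {1..n} permutes {1..n}" "restrict_id J2 {1..n} permutes {1..n}"
    using J(1,2) by (auto intro!: inj_on_restrict_id_permutes)
  then show thesis
  proof (rule that, intro ballI exI conjI)
    fix i assume i: "i \<in> {1..n}"
    show "S1 i \<in> {1, -1}" "S2 i \<in> {1, -1}" using J(3,4)[OF i] .
    show "frame_aut (rho i 4) = (\<lambda>k. S1 i * (e (block_pos 5 (restrict_id J1 {1..n} i) 1) k
           + e (block_pos 5 (restrict_id J1 {1..n} i) 2) k)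
         + S2 i * (e (block_pos 5 (restrict_id J2 {1..n} i) 3) k
           + e (block_pos 5 (restrict_id J2 {1..n} i) 4) k + e (block_pos 5 (restrict_id J2 {1..n} i) 5) k))"
      using pair_triple_constant_eq[OF std_vec_frame_aut pair_triple_constant_frame_aut_rho4[OF i]
          J(1,2)[OF i] W[OF i]] i
      by simp
  qed
qed

end

theorem mainTheorem14:
  fixes b :: int and n :: nat and rho :: "nat \<Rightarrow> nat \<Rightarrow> (nat \<Rightarrow> int)"
  assumes "b \<ge> 2"
    and "lattice_embedding b n rho"
  shows "\<exists>A. std_lattice_aut (5*n) A \<and>
    (\<exists>\<sigma>1 \<sigma>2. \<sigma>1 permutes {1..n} \<and> \<sigma>2 permutes {1..n} \<and>
      (\<forall>i\<in>{1..n}.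
         A (rho i 1) = e (1 + 5*(i-1)) - e (2 + 5*(i-1)) \<and>
         A (rho i 2) = e (3 + 5*(i-1)) - e (4 + 5*(i-1)) \<and>
         A (rho i 3) = e (4 + 5*(i-1)) - e (5 + 5*(i-1)) \<and>
         (\<exists>s1 s2 :: int. s1 \<in> {1, -1} \<and> s2 \<in> {1, -1} \<and>
            A (rho i 4) =
              (\<lambda>k. s1 * (e (1 + 5*(\<sigma>1 i - 1)) k + e (2 + 5*(\<sigma>1 i - 1)) k)
                 + s2 * (e (3 + 5*(\<sigma>2 i - 1)) k + e (4 + 5*(\<sigma>2 i - 1)) k
                         + e (5 + 5*(\<sigma>2 i - 1)) k)))))"
proof -
  interpret plumbing_embedding b n rho
    using assms(2) by unfold_locales
  obtain \<sigma>1 \<sigma>2 where \<sigma>: "\<sigma>1 permutes {1..n}" "\<sigma>2 permutes {1..n}"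
    and fourth: "\<forall>i\<in>{1..n}. \<exists>s1 s2 :: int. s1 \<in> {1, -1} \<and> s2 \<in> {1, -1} \<and>
       frame_aut (rho i 4) = (\<lambda>k. s1 * (e (block_pos 5 (\<sigma>1 i) 1) k + e (block_pos 5 (\<sigma>1 i) 2) k)
         + s2 * (e (block_pos 5 (\<sigma>2 i) 3) k + e (block_pos 5 (\<sigma>2 i) 4) k + e (block_pos 5 (\<sigma>2 i) 5) k))"
    by (rule frame_aut_rho4)
  show ?thesis
    using std_lattice_aut_frame_aut \<sigma> frame_aut_roots fourth unfolding block_pos_def
    by (intro exI[of _ frame_aut] exI[of _ \<sigma>1] exI[of _ \<sigma>2]) blast
qed

end
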